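(* Fix a merge tree $(T,f)$. The maps $\mathcal L$ and $\mathcal T$ are well defined and mutually inverse, hence give a bijection between the set of ordered merge trees $(T,f,(\le_h))$ and the set of leaf-ordered merge trees $(T,f,\sqsubseteq_L)$; that is, $\mathcal T(\mathcal L((T,f,(\le_h))))=(T,f,(\le_h))$ for every layer-order $(\le_h)$ and $\mathcal L(\mathcal T((T,f,\sqsubseteq_L)))=(T,f,\sqsubseteq_L)$ for every leaf-order $\sqsubseteq_L$.
   Context: A merge tree $(T,f)$: a finite rooted tree $T$ identified with its topological realisation, with a continuous $f\colon T\to\mathbb{R}\cup\{\infty\}$ strictly increasing towards the root, $f(v)=\infty$ iff $v$ is the root; the lowest leaf has height $0$; $L(T)$ is the set of leaves. $x_1\preceq x_2$ iff there is an $f$-increasing path from $x_1$ to $x_2$; $T_x$ is the subtree of descendants of $x$; $\mathrm{lca}$ is the lowest common ancestor; $\mathrm{anc}_h(x)$ is the unique ancestor of $x$ at height $h\ge f(x)$; $\mathbb{L}_h=\{x:f(x)=h\}$. A layer-order is a family $(\le_h)_{h\ge0}$ of total orders on the $\mathbb{L}_h$ that is consistent: for $h_1\le h_2$ and $x_1,x_2\in\mathbb{L}_{h_1}$, $x_1\le_{h_1}x_2$ implies $\mathrm{anc}_{h_2}(x_1)\le_{h_2}\mathrm{anc}_{h_2}(x_2)$; $(T,f,(\le_h))$ is an ordered merge tree. A leaf-order is a total order $\sqsubseteq_L$ on $L(T)$ that separates subtrees: for leaves $u,u_1,u_2$ with $u_1\sqsubseteq_L u\sqsubseteq_L u_2$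 we have $u\in T_{\mathrm{lca}(u_1,u_2)}$; $(T,f,\sqsubseteq_L)$ is a leaf-ordered merge tree. $\mathcal L((T,f,(\le_h)))=(T,f,\sqsubseteq_L)$ where, for leaves $u_1,u_2$ and $h=\max(f(u_1),f(u_2))$, $u_1\sqsubseteq_L u_2$ iff $\mathrm{anc}_h(u_1)\le_h\mathrm{anc}_h(u_2)$. $\mathcal T((T,f,\sqsubseteq_L))=(T,f,(\le_h))$ where, for $x_1,x_2\in\mathbb{L}_h$, $x_1\le_h x_2$ iff $x_1=x_2$ or $u_1\sqsubseteq_L u_2$ for all leaves $u_1\in T_{x_1}$, $u_2\in T_{x_2}$. *)

theory Defs
  imports "HOL-Library.Extended_Real"
begin

(* The topological realisation is modelled by points (v, h): the point at height h
   on the edge from v (non-root) to par v, with fv v \<le> h < fv (par v); the point (v, fv v)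
   is the vertex v itself. The root is the single point (r, \<infinity>).
   The height function f is the second component. *)

definition tree_edges :: "'v set \<Rightarrow> 'v \<Rightarrow> ('v \<Rightarrow> 'v) \<Rightarrow> ('v \<times> 'v) set" where
  "tree_edges V r par = {(v, par v) | v. v \<in> V - {r}}"

definition leaf_vertices :: "'v set \<Rightarrow> 'v \<Rightarrow> ('v \<Rightarrow> 'v) \<Rightarrow> 'v set" where
  "leaf_vertices V r par = {v \<in> V - {r}. \<not> (\<exists>c \<in> V - {r}. par c = v)}"

definition merge_tree :: "'v set \<Rightarrow> 'v \<Rightarrow> ('v \<Rightarrow> 'v) \<Rightarrow> ('v \<Rightarrow> ereal) \<Rightarrow> bool" where
  "merge_tree V r par fv \<longleftrightarrow>
     finite V \<and> r \<in> V \<and>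
     (\<forall>v \<in> V - {r}. par v \<in> V \<and> fv v < fv (par v)) \<and>
     (\<forall>v \<in> V. (v, r) \<in> (tree_edges V r par)\<^sup>*) \<and>
     (\<forall>v \<in> V. fv v = \<infinity> \<longleftrightarrow> v = r) \<and>
     (\<forall>v \<in> V. fv v \<noteq> -\<infinity>) \<and>
     (\<exists>u \<in> leaf_vertices V r par. fv u = 0) \<and>
     (\<forall>u \<in> leaf_vertices V r par. 0 \<le> fv u)"

definition mt_points :: "'v set \<Rightarrow> 'v \<Rightarrow> ('v \<Rightarrow> 'v) \<Rightarrow> ('v \<Rightarrow> ereal) \<Rightarrow> ('v \<times> ereal) set" where
  "mt_points V r par fv =
     {(r, \<infinity>)} \<union> {(v, h). v \<in> V - {r} \<and> fv v \<le> h \<and> h < fv (par v)}"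

definition mt_le :: "'v set \<Rightarrow> 'v \<Rightarrow> ('v \<Rightarrow> 'v) \<Rightarrow> ('v \<times> ereal) \<Rightarrow> ('v \<times> ereal) \<Rightarrow> bool" where
  "mt_le V r par x y \<longleftrightarrow> snd x \<le> snd y \<and> (fst x, fst y) \<in> (tree_edges V r par)\<^sup>*"

definition mt_leaves :: "'v set \<Rightarrow> 'v \<Rightarrow> ('v \<Rightarrow> 'v) \<Rightarrow> ('v \<Rightarrow> ereal) \<Rightarrow> ('v \<times> ereal) set" where
  "mt_leaves V r par fv = {(v, fv v) | v. v \<in> leaf_vertices V r par}"

definition mt_level :: "'v set \<Rightarrow> 'v \<Rightarrow> ('v \<Rightarrow> 'v) \<Rightarrow> ('v \<Rightarrow> ereal) \<Rightarrow> ereal \<Rightarrow> ('v \<times> ereal) set" where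
  "mt_level V r par fv h = {x \<in> mt_points V r par fv. snd x = h}"

definition mt_subtree :: "'v set \<Rightarrow> 'v \<Rightarrow> ('v \<Rightarrow> 'v) \<Rightarrow> ('v \<Rightarrow> ereal) \<Rightarrow> ('v \<times> ereal) \<Rightarrow> ('v \<times> ereal) set" where
  "mt_subtree V r par fv x = {y \<in> mt_points V r par fv. mt_le V r par y x}"

definition mt_anc :: "'v set \<Rightarrow> 'v \<Rightarrow> ('v \<Rightarrow> 'v) \<Rightarrow> ('v \<Rightarrow> ereal) \<Rightarrow> ereal \<Rightarrow> ('v \<times> ereal) \<Rightarrow> ('v \<times> ereal)" where
  "mt_anc V r par fv h x = (THE y. y \<in> mt_points V r par fv \<and> mt_le V r par x y \<and> snd y = h)"

definition mt_lca :: "'v set \<Rightarrow> 'v \<Rightarrow> ('v \<Rightarrow> 'v) \<Rightarrow> ('v \<Rightarrow> ereal) \<Rightarrow> ('v \<times> ereal) \<Rightarrow> ('v \<times> ereal) \<Rightarrow> ('v \<times> ereal)" where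
  "mt_lca V r par fv x y = (THE z. z \<in> mt_points V r par fv \<and> mt_le V r par x z \<and> mt_le V r par y z \<and>
        (\<forall>w \<in> mt_points V r par fv. mt_le V r par x w \<and> mt_le V r par y w \<longrightarrow> mt_le V r par z w))"

definition layer_order :: "'v set \<Rightarrow> 'v \<Rightarrow> ('v \<Rightarrow> 'v) \<Rightarrow> ('v \<Rightarrow> ereal) \<Rightarrow> (real \<Rightarrow> (('v \<times> ereal) \<times> ('v \<times> ereal)) set) \<Rightarrow> bool" where
  "layer_order V r par fv ord \<longleftrightarrow>
     (\<forall>h::real. 0 \<le> h \<longrightarrow> linear_order_on (mt_level V r par fv (ereal h)) (ord h)) \<and>
     (\<forall>h1 h2::real. 0 \<le> h1 \<and> h1 \<le> h2 \<longrightarrow>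
        (\<forall>x1 \<in> mt_level V r par fv (ereal h1). \<forall>x2 \<in> mt_level V r par fv (ereal h1).
           (x1, x2) \<in> ord h1 \<longrightarrow>
           (mt_anc V r par fv (ereal h2) x1, mt_anc V r par fv (ereal h2) x2) \<in> ord h2))"

definition leaf_order :: "'v set \<Rightarrow> 'v \<Rightarrow> ('v \<Rightarrow> 'v) \<Rightarrow> ('v \<Rightarrow> ereal) \<Rightarrow> (('v \<times> ereal) \<times> ('v \<times> ereal)) set \<Rightarrow> bool" where
  "leaf_order V r par fv lo \<longleftrightarrow>
     linear_order_on (mt_leaves V r par fv) lo \<and>
     (\<forall>u \<in> mt_leaves V r par fv. \<forall>u1 \<in> mt_leaves V r par fv. \<forall>u2 \<in> mt_leaves V r par fv.
        (u1, u) \<in> lo \<and> (u, u2) \<in> lo \<longrightarrow> u \<in> mt_subtree V r par fv (mt_lca V r par fv u1 u2))"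

definition layer_to_leaf :: "'v set \<Rightarrow> 'v \<Rightarrow> ('v \<Rightarrow> 'v) \<Rightarrow> ('v \<Rightarrow> ereal) \<Rightarrow> (real \<Rightarrow> (('v \<times> ereal) \<times> ('v \<times> ereal)) set) \<Rightarrow> (('v \<times> ereal) \<times> ('v \<times> ereal)) set" where
  "layer_to_leaf V r par fv ord =
     {(u1, u2). u1 \<in> mt_leaves V r par fv \<and> u2 \<in> mt_leaves V r par fv \<and>
        (let h = max (snd u1) (snd u2) in
          (mt_anc V r par fv h u1, mt_anc V r par fv h u2) \<in> ord (real_of_ereal h))}"

definition leaf_to_layer :: "'v set \<Rightarrow> 'v \<Rightarrow> ('v \<Rightarrow> 'v) \<Rightarrow> ('v \<Rightarrow> ereal) \<Rightarrow> (('v \<times> ereal) \<times> ('v \<times> ereal)) set \<Rightarrow> real \<Rightarrow> (('v \<times> ereal) \<times> ('v \<times> ereal)) set" where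
  "leaf_to_layer V r par fv lo h =
     {(x1, x2). x1 \<in> mt_level V r par fv (ereal h) \<and> x2 \<in> mt_level V r par fv (ereal h) \<and>
        (x1 = x2 \<or>
         (\<forall>u1 \<in> mt_leaves V r par fv \<inter> mt_subtree V r par fv x1.
            \<forall>u2 \<in> mt_leaves V r par fv \<inter> mt_subtree V r par fv x2. (u1, u2) \<in> lo))}"

end

theory Submission
  imports Defs
begin

text \<open>The points above a point of a merge tree form a chain, so every point x has a unique
  ancestor at each height h \<ge> f(x). For two leaves u1, u2 and h = max(f(u1), f(u2)) these
  ancestors coincide only if u1 = u2, since one of the leaves is its own ancestor at height h.
  Consistency of a layer-order carries the comparison of the two ancestors to every greater
  height; comparing three leaves, or two leaves and their lowest common ancestor, at one common
  height then gives transitivity and separation of the induced leaf-order. Conversely, separation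
  makes the leaves below two distinct points of a level two contiguous blocks of a leaf-order,
  and comparing blocks yields a layer-order which is consistent because blocks only merge as
  the height grows. As every point has a leaf below it, the two constructions are mutually
  inverse.\<close>

lemma linear_order_onI:
  assumes "R \<subseteq> A \<times> A" "\<And>a. a \<in> A \<Longrightarrow> (a, a) \<in> R"
    and "\<And>a b. (a, b) \<in> R \<Longrightarrow> (b, a) \<in> R \<Longrightarrow> a = b"
    and "\<And>a b c. (a, b) \<in> R \<Longrightarrow> (b, c) \<in> R \<Longrightarrow> (a, c) \<in> R"
    and "\<And>a b. a \<in> A \<Longrightarrow> b \<in> A \<Longrightarrow> a \<noteq> b \<Longrightarrow> (a, b) \<in> R \<or> (b, a) \<in> R"
  shows "linear_order_on A R"
  using assms
  unfolding linear_order_on_def partial_order_on_def preorder_on_def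
    refl_on_def antisym_def trans_def total_on_def
  by blast

context
  fixes A :: "'a set" and R :: "'a rel"
  assumes lin: "linear_order_on A R"
begin

lemma linear_order_on_field: "(a, b) \<in> R \<Longrightarrow> a \<in> A \<and> b \<in> A"
  using lin by (auto simp: linear_order_on_def partial_order_on_def preorder_on_def)

lemma linear_order_on_refl: "a \<in> A \<Longrightarrow> (a, a) \<in> R"
  using lin by (auto simp: linear_order_on_def partial_order_on_def preorder_on_def refl_on_def)

lemma linear_order_on_antisym: "(a, b) \<in> R \<Longrightarrow> (b, a) \<in> R \<Longrightarrow> a = b"
  using lin unfolding linear_order_on_def partial_order_on_def antisym_def by blast

lemma linear_order_on_trans: "(a, b) \<in> R \<Longrightarrow> (b, c) \<in> R \<Longrightarrow> (a, c) \<in> R"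
  using lin unfolding linear_order_on_def partial_order_on_def preorder_on_def trans_def by blast

lemma linear_order_on_total: "a \<in> A \<Longrightarrow> b \<in> A \<Longrightarrow> a \<noteq> b \<Longrightarrow> (a, b) \<in> R \<or> (b, a) \<in> R"
  using lin unfolding linear_order_on_def total_on_def by blast

end

locale mtree =
  fixes V :: "'v set" and r :: 'v and par :: "'v \<Rightarrow> 'v" and fv :: "'v \<Rightarrow> ereal"
  assumes merge_tree: "merge_tree V r par fv"
begin

abbreviation "E \<equiv> tree_edges V r par"
abbreviation "pts \<equiv> mt_points V r par fv"
abbreviation "lvl \<equiv> mt_level V r par fv"
abbreviation "leaves \<equiv> mt_leaves V r par fv"
abbreviation "anc \<equiv> mt_anc V r par fv"
abbreviation "lca \<equiv> mt_lca V r par fv"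
abbreviation below :: "'v \<times> ereal \<Rightarrow> 'v \<times> ereal \<Rightarrow> bool" (infix "\<preceq>" 50)
  where "x \<preceq> y \<equiv> mt_le V r par x y"

lemma finite_V: "finite V"
  and root_in_V: "r \<in> V"
  and par_in_V: "v \<in> V \<Longrightarrow> v \<noteq> r \<Longrightarrow> par v \<in> V"
  and fv_less_fv_par: "v \<in> V \<Longrightarrow> v \<noteq> r \<Longrightarrow> fv v < fv (par v)"
  and path_to_root: "v \<in> V \<Longrightarrow> (v, r) \<in> E\<^sup>*"
  and fv_eq_infinity_iff: "v \<in> V \<Longrightarrow> fv v = \<infinity> \<longleftrightarrow> v = r"
  and leaf_vertices_nonempty: "leaf_vertices V r par \<noteq> {}"
  and leaf_fv_nonneg: "u \<in> leaf_vertices V r par \<Longrightarrow> 0 \<le> fv u"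
  using merge_tree unfolding merge_tree_def by auto

lemma edge_iff: "(a, b) \<in> E \<longleftrightarrow> a \<in> V \<and> a \<noteq> r \<and> b = par a"
  by (auto simp: tree_edges_def)

lemma path_first_edge: "(a, b) \<in> E\<^sup>* \<Longrightarrow> a \<noteq> b \<Longrightarrow> a \<in> V \<and> a \<noteq> r \<and> (par a, b) \<in> E\<^sup>*"
  by (erule converse_rtranclE) (auto simp: edge_iff)

lemma path_from_root: "(r, b) \<in> E\<^sup>* \<Longrightarrow> b = r"
  by (erule converse_rtranclE) (auto simp: edge_iff)

lemma paths_from_vertex_chain: "(v, a) \<in> E\<^sup>* \<Longrightarrow> (v, b) \<in> E\<^sup>* \<Longrightarrow> (a, b) \<in> E\<^sup>* \<or> (b, a) \<in> E\<^sup>*"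
  by (rule single_valued_confluent) (auto simp: single_valued_def edge_iff)

lemma fv_mono_path: "(a, b) \<in> E\<^sup>* \<Longrightarrow> a \<in> V \<Longrightarrow> fv a \<le> fv b"
proof (induction rule: rtrancl_induct)
  case (step y z)
  then have "y \<in> V" "y \<noteq> r" "z = par y"
    using edge_iff by auto
  then show ?case using step fv_less_fv_par[of y] by auto
qed simp

lemma fv_strict_mono_path: "(a, b) \<in> E\<^sup>* \<Longrightarrow> a \<noteq> b \<Longrightarrow> fv a < fv b"
  using path_first_edge fv_less_fv_par fv_mono_path par_in_V by (metis order_less_le_trans)

lemma mem_pts_iff: "x \<in> pts \<longleftrightarrow>
    x = (r, \<infinity>) \<or> (fst x \<in> V \<and> fst x \<noteq> r \<and> fv (fst x) \<le> snd x \<and> snd x < fv (par (fst x)))"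
  by (cases x) (auto simp: mt_points_def)

lemma root_in_pts: "(r, \<infinity>) \<in> pts"
  by (simp add: mt_points_def)

lemma pts_fst_in_V: "x \<in> pts \<Longrightarrow> fst x \<in> V"
  using root_in_V by (auto simp: mem_pts_iff)

lemma fv_fst_le_snd: "x \<in> pts \<Longrightarrow> fv (fst x) \<le> snd x"
  using root_in_V fv_eq_infinity_iff by (auto simp: mem_pts_iff)

lemma pts_infinite_height: "x \<in> pts \<Longrightarrow> snd x = \<infinity> \<Longrightarrow> x = (r, \<infinity>)"
  by (auto simp: mem_pts_iff)

lemma pts_finite_height:
  "x \<in> pts \<Longrightarrow> snd x \<noteq> \<infinity> \<Longrightarrow> fst x \<in> V \<and> fst x \<noteq> r \<and> snd x < fv (par (fst x))"
  by (auto simp: mem_pts_iff)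

lemma mem_lvl_iff: "x \<in> lvl h \<longleftrightarrow> x \<in> pts \<and> snd x = h"
  by (simp add: mt_level_def)

lemma below_refl: "x \<preceq> x"
  by (simp add: mt_le_def)

lemma below_trans: "x \<preceq> y \<Longrightarrow> y \<preceq> z \<Longrightarrow> x \<preceq> z"
  by (auto simp: mt_le_def)

lemma below_height: "x \<preceq> y \<Longrightarrow> snd x \<le> snd y"
  by (simp add: mt_le_def)

lemma below_root: "x \<in> pts \<Longrightarrow> x \<preceq> (r, \<infinity>)"
  using path_to_root pts_fst_in_V by (auto simp: mt_le_def)

lemma height_less_if_path:
  assumes "x \<in> pts" "y \<in> pts" "(fst x, fst y) \<in> E\<^sup>*" "fst x \<noteq> fst y"
  shows "snd x < snd y"
proof -
  have x: "fst x \<in> V" "fst x \<noteq> r" "(par (fst x), fst y) \<in> E\<^sup>*"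
    using path_first_edge assms(3,4) by auto
  then have "snd x < fv (par (fst x))"
    using pts_finite_height pts_infinite_height assms(1) by fastforce
  also have "\<dots> \<le> fv (fst y)" using fv_mono_path x par_in_V by blast
  also have "\<dots> \<le> snd y" using fv_fst_le_snd assms(2) .
  finally show ?thesis .
qed

lemma below_same_height_eq: "x \<in> pts \<Longrightarrow> y \<in> pts \<Longrightarrow> x \<preceq> y \<Longrightarrow> snd y \<le> snd x \<Longrightarrow> x = y"
  using height_less_if_path by (fastforce simp: mt_le_def prod_eq_iff)

lemma below_antisym: "x \<in> pts \<Longrightarrow> y \<in> pts \<Longrightarrow> x \<preceq> y \<Longrightarrow> y \<preceq> x \<Longrightarrow> x = y"
  using below_same_height_eq below_height by blast

lemma above_chain:
  assumes "x \<preceq> y1" "x \<preceq> y2" "y1 \<in> pts" "y2 \<in> pts" "snd y1 \<le> snd y2"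
  shows "y1 \<preceq> y2"
proof -
  have "(fst y1, fst y2) \<in> E\<^sup>* \<or> (fst y2, fst y1) \<in> E\<^sup>*"
    using paths_from_vertex_chain assms(1,2) by (auto simp: mt_le_def)
  then show ?thesis
    using height_less_if_path[of y2 y1] assms(3-5) by (fastforce simp: mt_le_def)
qed

lemma above_same_height_eq:
  "x \<preceq> y1 \<Longrightarrow> x \<preceq> y2 \<Longrightarrow> y1 \<in> pts \<Longrightarrow> y2 \<in> pts \<Longrightarrow> snd y1 = snd y2 \<Longrightarrow> y1 = y2"
  using above_chain below_same_height_eq by (metis order_refl)

subsection \<open>Ancestors and lowest common ancestors\<close>

lemma ex_above_at_height:
  assumes x: "x \<in> pts" and h: "snd x \<le> ereal h"
  shows "\<exists>y\<in>pts. x \<preceq> y \<and> snd y = ereal h"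
proof -
  have "snd x \<noteq> \<infinity>" using h by auto
  then have x_fin: "fst x \<in> V" "fst x \<noteq> r" using pts_finite_height[OF x] by auto
  define S where "S = {w \<in> V. (fst x, w) \<in> E\<^sup>* \<and> fv w \<le> ereal h}"
  have "finite S" "fst x \<in> S"
    using finite_V x_fin fv_fst_le_snd[OF x] h by (auto simp: S_def)
  then obtain w where "w \<in> S" and w_max: "Max (fv ` S) = fv w"
    using obtains_MAX[of S fv] by blast
  have w_max': "fv w' \<le> fv w" if "w' \<in> S" for w'
    using w_max that \<open>finite S\<close> by (metis Max_ge finite_imageI image_eqI)
  have w: "w \<in> V" "(fst x, w) \<in> E\<^sup>*" "fv w \<le> ereal h" using \<open>w \<in> S\<close> by (auto simp: S_def)
  have "w \<noteq> r" using w fv_eq_infinity_iff by fastforce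
  then have "(fst x, par w) \<in> E\<^sup>*" "par w \<in> V"
    using w par_in_V edge_iff by (auto intro: rtrancl_into_rtrancl)
  then have "ereal h < fv (par w)"
    using w_max'[of "par w"] fv_less_fv_par[OF w(1) \<open>w \<noteq> r\<close>] by (force simp: S_def)
  then have "(w, ereal h) \<in> pts" using w \<open>w \<noteq> r\<close> by (simp add: mt_points_def)
  moreover have "x \<preceq> (w, ereal h)" using h w by (simp add: mt_le_def)
  ultimately show ?thesis by force
qed

lemma anc_eqI: "x \<preceq> y \<Longrightarrow> y \<in> pts \<Longrightarrow> anc (snd y) x = y"
  unfolding mt_anc_def by (rule the_equality) (auto intro: above_same_height_eq)

lemma
  assumes "x \<in> pts" "snd x \<le> ereal h"
  shows anc_in_lvl: "anc (ereal h) x \<in> lvl (ereal h)"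
    and below_anc: "x \<preceq> anc (ereal h) x"
proof -
  obtain y where "y \<in> pts" "x \<preceq> y" "snd y = ereal h"
    using ex_above_at_height[OF assms] by blast
  moreover from this have "anc (ereal h) x = y" using anc_eqI[of x y] by simp
  ultimately show "anc (ereal h) x \<in> lvl (ereal h)" "x \<preceq> anc (ereal h) x"
    by (simp_all add: mem_lvl_iff)
qed

lemma
  assumes "u \<preceq> x" "x \<in> lvl h"
  shows below_lvl_height: "snd u \<le> h"
    and anc_eq_if_below_lvl: "anc h u = x"
  using assms below_height anc_eqI by (metis mem_lvl_iff)+

lemma anc_self: "x \<in> pts \<Longrightarrow> anc (snd x) x = x"
  by (simp add: anc_eqI below_refl)

lemma anc_eq_anc_if_below:
  assumes "x \<preceq> z" "z \<in> pts" "snd z \<le> ereal h"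
  shows "anc (ereal h) x = anc (ereal h) z"
proof -
  let ?y = "anc (ereal h) z"
  have "?y \<in> pts" "snd ?y = ereal h" "z \<preceq> ?y"
    using anc_in_lvl[OF assms(2,3)] below_anc[OF assms(2,3)] by (simp_all add: mem_lvl_iff)
  then show ?thesis using anc_eqI[of x ?y] below_trans[OF assms(1)] by simp
qed

lemma anc_anc:
  assumes "x \<in> pts" "snd x \<le> ereal h1" "h1 \<le> h2"
  shows "anc (ereal h2) (anc (ereal h1) x) = anc (ereal h2) x"
proof -
  have "anc (ereal h1) x \<in> lvl (ereal h1)" "x \<preceq> anc (ereal h1) x"
    using anc_in_lvl below_anc assms(1,2) by blast+
  then show ?thesis
    using anc_eq_anc_if_below[of x "anc (ereal h1) x" h2] assms(3) by (simp add: mem_lvl_iff)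
qed

lemma upper_bound_on_edge:
  assumes z1: "z1 \<in> pts" "x \<preceq> z1" "y \<preceq> z1"
  defines "z \<equiv> (fst z1, max (fv (fst z1)) (max (snd x) (snd y)))"
  shows "z \<in> pts" "x \<preceq> z" "y \<preceq> z"
proof -
  have "snd z \<le> snd z1"
    using fv_fst_le_snd[OF z1(1)] below_height[OF z1(2)] below_height[OF z1(3)] by (simp add: z_def)
  show "z \<in> pts"
  proof (cases "fst z1 = r")
    case True
    moreover have "fv r = \<infinity>" using root_in_V fv_eq_infinity_iff by blast
    ultimately show ?thesis using root_in_pts by (simp add: z_def)
  next
    case False
    then have "snd z1 \<noteq> \<infinity>" using pts_infinite_height[OF z1(1)] by auto
    then have "snd z1 < fv (par (fst z1))" using pts_finite_height[OF z1(1)] by simp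
    with \<open>snd z \<le> snd z1\<close> have "snd z < fv (par (fst z1))" by (rule le_less_trans)
    then show ?thesis using False pts_fst_in_V[OF z1(1)] by (simp add: mem_pts_iff z_def)
  qed
  show "x \<preceq> z" "y \<preceq> z" using z1(2,3) by (simp_all add: mt_le_def z_def le_max_iff_disj)
qed

lemma ex_least_upper_bound:
  assumes x: "x \<in> pts" and y: "y \<in> pts"
  shows "\<exists>z\<in>pts. x \<preceq> z \<and> y \<preceq> z \<and> (\<forall>w\<in>pts. x \<preceq> w \<and> y \<preceq> w \<longrightarrow> z \<preceq> w)"
proof -
  define C where "C = {z \<in> pts. x \<preceq> z \<and> y \<preceq> z}"
  have "(r, \<infinity>) \<in> C" using x y below_root root_in_pts by (simp add: C_def)
  moreover have "fst ` C \<subseteq> V" using pts_fst_in_V by (auto simp: C_def)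
  then have "finite (fst ` C)" using finite_V by (rule finite_subset)
  ultimately obtain w0 where "w0 \<in> fst ` C" and w0_min: "Min (fv ` fst ` C) = fv w0"
    using obtains_MIN[of "fst ` C" fv] by blast
  have w0_min': "fv w0 \<le> fv (fst w)" if "w \<in> C" for w
    using w0_min that \<open>finite (fst ` C)\<close> by (metis Min_le finite_imageI image_eqI)
  obtain z1 where z1: "z1 \<in> pts" "x \<preceq> z1" "y \<preceq> z1" "fst z1 = w0"
    using \<open>w0 \<in> fst ` C\<close> by (auto simp: C_def)
  text \<open>The least upper bound lies on the lowest vertex carrying a common upper bound.\<close>
  define z where "z = (w0, max (fv w0) (max (snd x) (snd y)))"
  have z: "z \<in> pts" "x \<preceq> z" "y \<preceq> z"
    using upper_bound_on_edge[OF z1(1-3)] z1(4) by (simp_all add: z_def)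
  have "z \<preceq> w" if w: "w \<in> pts" "x \<preceq> w" "y \<preceq> w" for w
  proof (rule ccontr)
    assume "\<not> z \<preceq> w"
    then have "snd w < snd z" using above_chain[OF z(2) w(2) z(1) w(1)] by force
    then have "w \<preceq> z" using above_chain[OF w(2) z(2) w(1) z(1)] by simp
    then have "(fst w, w0) \<in> E\<^sup>*" by (simp add: mt_le_def z_def)
    moreover have "fv w0 \<le> fv (fst w)" using w w0_min' by (simp add: C_def)
    ultimately have "fst w = w0" using fv_strict_mono_path by (meson leD)
    then have "snd z \<le> snd w"
      using fv_fst_le_snd[OF w(1)] below_height[OF w(2)] below_height[OF w(3)] by (simp add: z_def)
    with \<open>snd w < snd z\<close> show False by simp
  qed
  then show ?thesis using z by blast
qed

lemma
  assumes "x \<in> pts" "y \<in> pts"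
  shows lca_in_pts: "lca x y \<in> pts"
    and below_lca1: "x \<preceq> lca x y"
    and below_lca2: "y \<preceq> lca x y"
    and lca_least: "w \<in> pts \<Longrightarrow> x \<preceq> w \<Longrightarrow> y \<preceq> w \<Longrightarrow> lca x y \<preceq> w"
proof -
  obtain z where z: "z \<in> pts" "x \<preceq> z" "y \<preceq> z" "\<forall>w\<in>pts. x \<preceq> w \<and> y \<preceq> w \<longrightarrow> z \<preceq> w"
    using ex_least_upper_bound[OF assms] by blast
  have "lca x y = z"
    unfolding mt_lca_def by (rule the_equality) (use z below_antisym in blast)+
  then show "lca x y \<in> pts" "x \<preceq> lca x y" "y \<preceq> lca x y"
    "w \<in> pts \<Longrightarrow> x \<preceq> w \<Longrightarrow> y \<preceq> w \<Longrightarrow> lca x y \<preceq> w"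
    using z by auto
qed

lemma mem_leaves_iff: "u \<in> leaves \<longleftrightarrow> fst u \<in> leaf_vertices V r par \<and> snd u = fv (fst u)"
  by (cases u) (auto simp: mt_leaves_def)

lemma leaf_in_pts: "u \<in> leaves \<Longrightarrow> u \<in> pts"
  using fv_less_fv_par by (auto simp: mem_leaves_iff leaf_vertices_def mem_pts_iff)

lemma leaf_height_real:
  assumes "u \<in> leaves"
  shows "\<exists>h. snd u = ereal h \<and> 0 \<le> h"
proof -
  have "0 \<le> snd u" "snd u \<noteq> \<infinity>"
    using assms leaf_fv_nonneg fv_eq_infinity_iff by (auto simp: mem_leaves_iff leaf_vertices_def)
  then show ?thesis by (cases "snd u") auto
qed

lemma leaves_max_height:
  assumes "u1 \<in> leaves" "u2 \<in> leaves"
  obtains m where "max (snd u1) (snd u2) = ereal m" "0 \<le> m" "snd u1 \<le> ereal m" "snd u2 \<le> ereal m"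
proof -
  obtain h1 h2 where "snd u1 = ereal h1" "snd u2 = ereal h2" "0 \<le> h1"
    using leaf_height_real assms by metis
  then show ?thesis using that[of "max h1 h2"] by auto
qed

lemma below_leaf_eq:
  assumes u: "u \<in> leaves" and "y \<in> pts" "y \<preceq> u"
  shows "y = u"
proof -
  have "(fst y, fst u) \<in> E\<^sup>*" using assms(3) by (simp add: mt_le_def)
  then have "fst y = fst u"
  proof (cases rule: rtranclE)
    case (step c)
    then show ?thesis using u by (auto simp: edge_iff mem_leaves_iff leaf_vertices_def)
  qed
  moreover have "snd y = snd u"
    using below_height[OF assms(3)] fv_fst_le_snd[OF assms(2)] u \<open>fst y = fst u\<close>
    by (auto simp: mem_leaves_iff intro: antisym)
  ultimately show ?thesis by (simp add: prod_eq_iff)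
qed

lemma leaf_eq_if_anc_eq_at_leaf_height:
  assumes u: "u \<in> leaves" and v: "v \<in> leaves" and h: "snd u = ereal h" "snd v \<le> ereal h"
    and eq: "anc (ereal h) v = anc (ereal h) u"
  shows "v = u"
proof -
  have "anc (ereal h) u = u" using anc_self[OF leaf_in_pts[OF u]] h(1) by simp
  then have "v \<preceq> u" using below_anc[OF leaf_in_pts[OF v] h(2)] eq by simp
  then show ?thesis using below_leaf_eq[OF u leaf_in_pts[OF v]] by blast
qed

lemma leaf_below_if_anc_eq:
  assumes u: "u \<in> leaves" and z: "z \<in> pts" and h: "snd u \<le> ereal h" "snd z \<le> ereal h"
    and "snd u = ereal h \<or> snd z = ereal h" and eq: "anc (ereal h) u = anc (ereal h) z"
  shows "u \<preceq> z"
  using \<open>snd u = ereal h \<or> snd z = ereal h\<close>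
proof
  assume "snd u = ereal h"
  then have "z \<preceq> u" using below_anc[OF z h(2)] anc_self[OF leaf_in_pts[OF u]] eq by simp
  then show ?thesis using below_leaf_eq[OF u z] below_refl by simp
next
  assume "snd z = ereal h"
  then show ?thesis using below_anc[OF leaf_in_pts[OF u] h(1)] anc_self[OF z] eq by simp
qed

lemma ex_leaf_below:
  assumes x: "x \<in> pts"
  shows "\<exists>u\<in>leaves. u \<preceq> x"
proof (cases "snd x = \<infinity>")
  case True
  then obtain v where "v \<in> leaf_vertices V r par" using leaf_vertices_nonempty by blast
  then show ?thesis
    using True pts_infinite_height[OF x] below_root leaf_in_pts
    by (metis fst_conv mem_leaves_iff snd_conv)
next
  case False
  define S where "S = {w \<in> V. (w, fst x) \<in> E\<^sup>*}"
  have "finite S" "fst x \<in> S" using finite_V pts_fst_in_V[OF x] by (auto simp: S_def)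
  then obtain w where "w \<in> S" and w_min: "Min (fv ` S) = fv w"
    using obtains_MIN[of S fv] by blast
  have w_min': "fv w \<le> fv w'" if "w' \<in> S" for w'
    using w_min that \<open>finite S\<close> by (metis Min_le finite_imageI image_eqI)
  have w: "w \<in> V" "(w, fst x) \<in> E\<^sup>*" using \<open>w \<in> S\<close> by (auto simp: S_def)
  have "w \<noteq> r" using w(2) path_from_root pts_finite_height[OF x False] by blast
  moreover have "par c \<noteq> w" if "c \<in> V" "c \<noteq> r" for c
  proof
    assume "par c = w"
    then have "(c, fst x) \<in> E\<^sup>*"
      using that w(2) by (auto simp: edge_iff intro: converse_rtrancl_into_rtrancl)
    then show False
      using w_min'[of c] fv_less_fv_par[OF that] \<open>par c = w\<close> that by (auto simp: S_def)
  qed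
  ultimately have "(w, fv w) \<in> leaves"
    using w(1) by (auto simp: mt_leaves_def leaf_vertices_def)
  moreover have "(w, fv w) \<preceq> x"
    using fv_mono_path[OF w(2,1)] fv_fst_le_snd[OF x] w(2) by (simp add: mt_le_def)
  ultimately show ?thesis by blast
qed

lemma leaves_eq_if_anc_eq_at_max_height:
  assumes u: "u1 \<in> leaves" "u2 \<in> leaves" and m: "max (snd u1) (snd u2) = ereal m"
    and eq: "anc (ereal m) u1 = anc (ereal m) u2"
  shows "u1 = u2"
proof -
  have "snd u1 \<le> ereal m" "snd u2 \<le> ereal m" unfolding m[symmetric] by simp_all
  moreover have "snd u1 = ereal m \<or> snd u2 = ereal m" using m by (metis max_def)
  ultimately show ?thesis
    using leaf_eq_if_anc_eq_at_leaf_height[OF u(1,2)] leaf_eq_if_anc_eq_at_leaf_height[OF u(2,1)] eq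
    by metis
qed

lemma layer_to_leaf_iff:
  assumes "u1 \<in> leaves" "u2 \<in> leaves" "max (snd u1) (snd u2) = ereal m"
  shows "(u1, u2) \<in> layer_to_leaf V r par fv R \<longleftrightarrow> (anc (ereal m) u1, anc (ereal m) u2) \<in> R m"
  using assms by (simp add: layer_to_leaf_def Let_def)

definition leaves_before :: "(('v \<times> ereal) \<times> ('v \<times> ereal)) set \<Rightarrow> 'v \<times> ereal \<Rightarrow> 'v \<times> ereal \<Rightarrow> bool"
  where "leaves_before R x y \<longleftrightarrow> (\<forall>a\<in>leaves. a \<preceq> x \<longrightarrow> (\<forall>b\<in>leaves. b \<preceq> y \<longrightarrow> (a, b) \<in> R))"

lemma leaf_to_layer_iff:
  "(x1, x2) \<in> leaf_to_layer V r par fv R h \<longleftrightarrow>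
     x1 \<in> lvl (ereal h) \<and> x2 \<in> lvl (ereal h) \<and> (x1 = x2 \<or> leaves_before R x1 x2)"
  unfolding leaf_to_layer_def leaves_before_def mt_subtree_def using leaf_in_pts by auto

end

subsection \<open>From layer-orders to leaf-orders\<close>

locale layer_ordered_mtree = mtree V r par fv for V :: "'v set" and r par fv +
  fixes ord :: "real \<Rightarrow> (('v \<times> ereal) \<times> ('v \<times> ereal)) set"
  assumes layer_order: "layer_order V r par fv ord"
begin

abbreviation "L \<equiv> layer_to_leaf V r par fv ord"

lemma ord_linear: "0 \<le> h \<Longrightarrow> linear_order_on (lvl (ereal h)) (ord h)"
  using layer_order by (simp add: layer_order_def)

lemma ord_anc_mono:
  assumes "0 \<le> h1" "h1 \<le> h2" "(x1, x2) \<in> ord h1"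
  shows "(anc (ereal h2) x1, anc (ereal h2) x2) \<in> ord h2"
  using layer_order assms linear_order_on_field[OF ord_linear[OF assms(1)] assms(3)]
  unfolding layer_order_def by blast

lemma L_leaves: "(u1, u2) \<in> L \<Longrightarrow> u1 \<in> leaves \<and> u2 \<in> leaves"
  by (simp add: layer_to_leaf_def)

lemma L_refl:
  assumes u: "u \<in> leaves"
  shows "(u, u) \<in> L"
proof -
  obtain m where m: "max (snd u) (snd u) = ereal m" "0 \<le> m" "snd u \<le> ereal m"
    using leaves_max_height[OF u u] by blast
  then show ?thesis
    using layer_to_leaf_iff[OF u u m(1)] linear_order_on_refl[OF ord_linear[OF m(2)]]
      anc_in_lvl[OF leaf_in_pts[OF u] m(3)] by blast
qed

lemma L_antisym:
  assumes "(u1, u2) \<in> L" "(u2, u1) \<in> L"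
  shows "u1 = u2"
proof -
  have u: "u1 \<in> leaves" "u2 \<in> leaves" using assms L_leaves by auto
  obtain m where m: "max (snd u1) (snd u2) = ereal m" "0 \<le> m"
    using leaves_max_height[OF u] by blast
  then have m': "max (snd u2) (snd u1) = ereal m" by (simp add: max.commute)
  have "anc (ereal m) u1 = anc (ereal m) u2"
    using linear_order_on_antisym[OF ord_linear[OF m(2)]] assms
      layer_to_leaf_iff[OF u m(1)] layer_to_leaf_iff[OF u(2,1) m'] by blast
  then show ?thesis using leaves_eq_if_anc_eq_at_max_height[OF u m(1)] by blast
qed

lemma L_total:
  assumes u: "u1 \<in> leaves" "u2 \<in> leaves" and "u1 \<noteq> u2"
  shows "(u1, u2) \<in> L \<or> (u2, u1) \<in> L"
proof -
  obtain m where m: "max (snd u1) (snd u2) = ereal m" "0 \<le> m" "snd u1 \<le> ereal m" "snd u2 \<le> ereal m"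
    using leaves_max_height[OF u] by blast
  then have m': "max (snd u2) (snd u1) = ereal m" by (simp add: max.commute)
  have "anc (ereal m) u1 \<noteq> anc (ereal m) u2"
    using leaves_eq_if_anc_eq_at_max_height[OF u m(1)] \<open>u1 \<noteq> u2\<close> by blast
  moreover have "anc (ereal m) u1 \<in> lvl (ereal m)" "anc (ereal m) u2 \<in> lvl (ereal m)"
    using anc_in_lvl leaf_in_pts u m(3,4) by auto
  ultimately show ?thesis
    using linear_order_on_total[OF ord_linear[OF m(2)]]
      layer_to_leaf_iff[OF u m(1)] layer_to_leaf_iff[OF u(2,1) m'] by blast
qed

lemma L_lift:
  assumes L: "(u1, u2) \<in> L" and h: "snd u1 \<le> ereal h" "snd u2 \<le> ereal h"
  shows "(anc (ereal h) u1, anc (ereal h) u2) \<in> ord h"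
proof -
  have u: "u1 \<in> leaves" "u2 \<in> leaves" using L L_leaves by auto
  obtain m where m: "max (snd u1) (snd u2) = ereal m" "0 \<le> m" "snd u1 \<le> ereal m" "snd u2 \<le> ereal m"
    using leaves_max_height[OF u] by blast
  have "m \<le> h" using m(1) h by (metis ereal_less_eq(3) max.bounded_iff)
  have "(anc (ereal m) u1, anc (ereal m) u2) \<in> ord m" using L layer_to_leaf_iff[OF u m(1)] by blast
  from ord_anc_mono[OF m(2) \<open>m \<le> h\<close> this] show ?thesis
    using anc_anc leaf_in_pts u m(3,4) \<open>m \<le> h\<close> by simp
qed

lemma L_iff_at_height:
  assumes u: "u1 \<in> leaves" "u2 \<in> leaves" and h: "snd u1 \<le> ereal h" "snd u2 \<le> ereal h"
    and ne: "anc (ereal h) u1 \<noteq> anc (ereal h) u2"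
  shows "(u1, u2) \<in> L \<longleftrightarrow> (anc (ereal h) u1, anc (ereal h) u2) \<in> ord h"
proof
  assume "(anc (ereal h) u1, anc (ereal h) u2) \<in> ord h"
  moreover have "0 \<le> h" using leaf_height_real[OF u(1)] h(1) by force
  ultimately show "(u1, u2) \<in> L"
    using L_total[OF u] L_lift[of u2 u1 h] h ne linear_order_on_antisym[OF ord_linear] by blast
qed (use L_lift h in blast)

lemma L_trans:
  assumes "(u1, u2) \<in> L" "(u2, u3) \<in> L"
  shows "(u1, u3) \<in> L"
proof -
  have u: "u1 \<in> leaves" "u2 \<in> leaves" "u3 \<in> leaves" using assms L_leaves by auto
  obtain h1 h2 h3 where h: "snd u1 = ereal h1" "snd u2 = ereal h2" "snd u3 = ereal h3" "0 \<le> h1"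
    using leaf_height_real u by metis
  define H where "H = max h1 (max h2 h3)"
  have s: "snd u1 \<le> ereal H" "snd u2 \<le> ereal H" "snd u3 \<le> ereal H"
    using h by (auto simp: H_def le_max_iff_disj)
  have "0 \<le> H" using h by (simp add: H_def)
  let ?a = "\<lambda>u. anc (ereal H) u"
  have o12: "(?a u1, ?a u2) \<in> ord H" and o23: "(?a u2, ?a u3) \<in> ord H"
    using L_lift assms s by blast+
  show ?thesis
  proof (cases "?a u1 = ?a u3")
    case False
    then show ?thesis
      using L_iff_at_height[OF u(1,3) s(1,3)] linear_order_on_trans[OF ord_linear] o12 o23 \<open>0 \<le> H\<close>
      by blast
  next
    case True
    then have "?a u1 = ?a u2"
      using linear_order_on_antisym[OF ord_linear[OF \<open>0 \<le> H\<close>] o12] o23 by simp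
    text \<open>All three ancestors coincide at the height of one of the leaves, which is then
      the only leaf below them.\<close>
    have v: "v \<in> leaves" "snd v \<le> ereal H" "?a v = ?a u1" if "v \<in> {u1, u2, u3}" for v
      using that u s True \<open>?a u1 = ?a u2\<close> by auto
    have "v = u" if "v \<in> {u1, u2, u3}" "u \<in> {u1, u2, u3}" "snd u = ereal H" for u v
      using leaf_eq_if_anc_eq_at_leaf_height[OF v(1)[OF that(2)] v(1)[OF that(1)] that(3)]
        v(2,3)[OF that(1)] v(3)[OF that(2)] by simp
    moreover have "snd u1 = ereal H \<or> snd u2 = ereal H \<or> snd u3 = ereal H"
      using h by (auto simp: H_def max_def)
    ultimately have "u1 = u3" by blast
    then show ?thesis using L_refl u(1) by simp
  qed
qed

lemma L_separates:
  assumes u: "u \<in> leaves" "u1 \<in> leaves" "u2 \<in> leaves" and L: "(u1, u) \<in> L" "(u, u2) \<in> L"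
  shows "u \<preceq> lca u1 u2"
proof -
  define z where "z = lca u1 u2"
  have z: "z \<in> pts" "u1 \<preceq> z" "u2 \<preceq> z"
    using lca_in_pts below_lca1 below_lca2 leaf_in_pts u by (auto simp: z_def)
  have "u \<preceq> z"
  proof (cases "snd z = \<infinity>")
    case True
    then show ?thesis using pts_infinite_height z(1) below_root leaf_in_pts u(1) by simp
  next
    case False
    obtain h0 h1 where h: "snd u = ereal h0" "0 \<le> h0" "snd u1 = ereal h1"
      using leaf_height_real u(1,2) by metis
    then obtain hz where hz: "snd z = ereal hz"
      using False below_height[OF z(2)] by (cases "snd z") auto
    define H where "H = max h0 hz"
    have "0 \<le> H" using h by (simp add: H_def)
    have s: "snd u \<le> ereal H" "snd z \<le> ereal H" "snd u1 \<le> ereal H" "snd u2 \<le> ereal H"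
      using h hz below_height[OF z(2)] below_height[OF z(3)]
      by (auto simp: H_def le_max_iff_disj intro: order_trans)
    have A: "anc (ereal H) u1 = anc (ereal H) z" "anc (ereal H) u2 = anc (ereal H) z"
      using anc_eq_anc_if_below z s(2) by auto
    have "(anc (ereal H) z, anc (ereal H) u) \<in> ord H"
      using L_lift[OF L(1) s(3,1)] A(1) by simp
    moreover have "(anc (ereal H) u, anc (ereal H) z) \<in> ord H"
      using L_lift[OF L(2) s(1,4)] A(2) by simp
    ultimately have "anc (ereal H) u = anc (ereal H) z"
      using linear_order_on_antisym[OF ord_linear[OF \<open>0 \<le> H\<close>]] by blast
    moreover have "snd u = ereal H \<or> snd z = ereal H" using h hz by (simp add: H_def max_def)
    ultimately show ?thesis using leaf_below_if_anc_eq[OF u(1) z(1) s(1,2)] by blast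
  qed
  then show ?thesis by (simp add: z_def)
qed

lemma leaf_order_L: "leaf_order V r par fv L"
proof -
  have "linear_order_on leaves L"
  proof (rule linear_order_onI)
    show "L \<subseteq> leaves \<times> leaves" by (auto dest: L_leaves)
  qed (use L_refl L_antisym L_trans L_total in blast)+
  then show ?thesis
    unfolding leaf_order_def mt_subtree_def using L_separates leaf_in_pts by blast
qed

lemma leaf_to_layer_L: "0 \<le> h \<Longrightarrow> leaf_to_layer V r par fv L h = ord h"
proof safe
  fix x1 x2 assume "0 \<le> h" and x: "(x1, x2) \<in> leaf_to_layer V r par fv L h"
  then have lvl: "x1 \<in> lvl (ereal h)" "x2 \<in> lvl (ereal h)" by (simp_all add: leaf_to_layer_iff)
  show "(x1, x2) \<in> ord h"
  proof (cases "x1 = x2")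
    case True
    then show ?thesis using linear_order_on_refl[OF ord_linear[OF \<open>0 \<le> h\<close>] lvl(1)] by simp
  next
    case False
    obtain u1 u2 where "u1 \<in> leaves" "u1 \<preceq> x1" "u2 \<in> leaves" "u2 \<preceq> x2"
      using ex_leaf_below lvl by (meson mem_lvl_iff)
    moreover from this have "(u1, u2) \<in> L"
      using x False by (simp add: leaf_to_layer_iff leaves_before_def)
    ultimately show ?thesis
      using L_lift[of u1 u2 h] below_lvl_height anc_eq_if_below_lvl lvl by metis
  qed
next
  fix x1 x2 assume "0 \<le> h" and x: "(x1, x2) \<in> ord h"
  then have lvl: "x1 \<in> lvl (ereal h)" "x2 \<in> lvl (ereal h)"
    using linear_order_on_field[OF ord_linear] by blast+
  have "(u1, u2) \<in> L" if "x1 \<noteq> x2" "u1 \<in> leaves" "u1 \<preceq> x1" "u2 \<in> leaves" "u2 \<preceq> x2" for u1 u2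
    using that L_iff_at_height[of u1 u2 h] below_lvl_height anc_eq_if_below_lvl lvl x by metis
  then show "(x1, x2) \<in> leaf_to_layer V r par fv L h"
    using lvl by (auto simp: leaf_to_layer_iff leaves_before_def)
qed

end

subsection \<open>From leaf-orders to layer-orders\<close>

locale leaf_ordered_mtree = mtree V r par fv for V :: "'v set" and r par fv +
  fixes lo :: "(('v \<times> ereal) \<times> ('v \<times> ereal)) set"
  assumes leaf_order: "leaf_order V r par fv lo"
begin

abbreviation "T \<equiv> leaf_to_layer V r par fv lo"

lemma lo_linear: "linear_order_on leaves lo"
  using leaf_order by (simp add: leaf_order_def)

lemma leaf_between_below:
  assumes "x \<in> pts" "u \<in> leaves" "u1 \<in> leaves" "u2 \<in> leaves" "u1 \<preceq> x" "u2 \<preceq> x"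
    and "(u1, u) \<in> lo" "(u, u2) \<in> lo"
  shows "u \<preceq> x"
proof -
  have "u \<preceq> lca u1 u2"
    using leaf_order assms(2-4,7,8) unfolding leaf_order_def mt_subtree_def by blast
  moreover have "lca u1 u2 \<preceq> x" using lca_least leaf_in_pts assms(1,3-6) by blast
  ultimately show ?thesis by (rule below_trans)
qed

text \<open>If the leaves below two points of a level interleaved, separation would put a leaf
  of one block into the subtree of the other point.\<close>

lemma leaves_before_total:
  assumes x: "x1 \<in> lvl h" "x2 \<in> lvl h" "x1 \<noteq> x2"
  shows "leaves_before lo x1 x2 \<or> leaves_before lo x2 x1"
proof (rule ccontr)
  assume "\<not> ?thesis"
  then obtain a b a' b' where ab: "a \<in> leaves" "a \<preceq> x1" "b \<in> leaves" "b \<preceq> x2" "(a, b) \<notin> lo"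
    and ab': "a' \<in> leaves" "a' \<preceq> x1" "b' \<in> leaves" "b' \<preceq> x2" "(b', a') \<notin> lo"
    by (auto simp: leaves_before_def)
  have xP: "x1 \<in> pts" "x2 \<in> pts" using x by (auto simp: mem_lvl_iff)
  have disjoint: "c \<noteq> d" if "c \<preceq> x1" "d \<preceq> x2" for c d
    using that above_same_height_eq[of d x1 x2] x by (metis mem_lvl_iff)
  have "(b, a) \<in> lo" "(a', b') \<in> lo"
    using linear_order_on_total[OF lo_linear] ab ab' disjoint by blast+
  show False
  proof (cases "(a', b) \<in> lo")
    case True
    then have "b \<preceq> x1"
      using leaf_between_below[OF xP(1) ab(3) ab'(1) ab(1) ab'(2) ab(2)] \<open>(b, a) \<in> lo\<close> by blast
    then show False using disjoint ab(4) by blast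
  next
    case False
    then have "(b, a') \<in> lo"
      using linear_order_on_total[OF lo_linear] ab(3) ab'(1,2) ab(4) disjoint by blast
    then have "a' \<preceq> x2"
      using leaf_between_below[OF xP(2) ab'(1) ab(3) ab'(3) ab(4) ab'(4)] \<open>(a', b') \<in> lo\<close> by blast
    then show False using disjoint ab'(2) by blast
  qed
qed

lemma leaves_before_antisym:
  assumes x: "x1 \<in> lvl h" "x2 \<in> lvl h" and "leaves_before lo x1 x2" "leaves_before lo x2 x1"
  shows "x1 = x2"
proof -
  obtain u1 u2 where u: "u1 \<in> leaves" "u1 \<preceq> x1" "u2 \<in> leaves" "u2 \<preceq> x2"
    using ex_leaf_below x by (meson mem_lvl_iff)
  then have "u1 = u2"
    using assms(3,4) linear_order_on_antisym[OF lo_linear] by (auto simp: leaves_before_def)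
  then show ?thesis using above_same_height_eq u x by (auto simp: mem_lvl_iff)
qed

lemma leaves_before_trans:
  assumes "y \<in> pts" "leaves_before lo x y" "leaves_before lo y z"
  shows "leaves_before lo x z"
proof -
  obtain u where "u \<in> leaves" "u \<preceq> y" using ex_leaf_below assms(1) by blast
  then show ?thesis
    using assms(2,3) linear_order_on_trans[OF lo_linear] unfolding leaves_before_def by blast
qed

lemma leaves_before_mono:
  "leaves_before lo y1 y2 \<Longrightarrow> x1 \<preceq> y1 \<Longrightarrow> x2 \<preceq> y2 \<Longrightarrow> leaves_before lo x1 x2"
  by (auto simp: leaves_before_def intro: below_trans)

lemma T_linear: "linear_order_on (lvl (ereal h)) (T h)"
proof (rule linear_order_onI)
  fix x1 x2 x3
  assume "(x1, x2) \<in> T h" "(x2, x3) \<in> T h"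
  then show "(x1, x3) \<in> T h"
    using leaves_before_trans[of x2 x1 x3] by (metis leaf_to_layer_iff mem_lvl_iff)
qed (use leaves_before_total leaves_before_antisym in \<open>auto simp: leaf_to_layer_iff\<close>)

lemma layer_order_T: "layer_order V r par fv T"
  unfolding layer_order_def
proof (intro conjI allI impI ballI T_linear)
  fix h1 h2 :: real and x1 x2
  assume h: "0 \<le> h1 \<and> h1 \<le> h2" and x: "x1 \<in> lvl (ereal h1)" "x2 \<in> lvl (ereal h1)"
    and "(x1, x2) \<in> T h1"
  define y1 where "y1 = anc (ereal h2) x1"
  define y2 where "y2 = anc (ereal h2) x2"
  have y: "y1 \<in> lvl (ereal h2)" "y2 \<in> lvl (ereal h2)" "x1 \<preceq> y1" "x2 \<preceq> y2"
    using anc_in_lvl below_anc x h by (auto simp: y1_def y2_def mem_lvl_iff)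
  show "(y1, y2) \<in> T h2"
  proof (cases "y1 = y2")
    case False
    then have "x1 \<noteq> x2" by (auto simp: y1_def y2_def)
    then have "leaves_before lo x1 x2" using \<open>(x1, x2) \<in> T h1\<close> by (simp add: leaf_to_layer_iff)
    moreover have "\<not> leaves_before lo x2 x1"
      using leaves_before_antisym[OF x] calculation \<open>x1 \<noteq> x2\<close> by blast
    ultimately have "leaves_before lo y1 y2"
      using leaves_before_total[OF y(1,2) False] leaves_before_mono y(3,4) by blast
    then show ?thesis using y by (simp add: leaf_to_layer_iff)
  qed (use y in \<open>simp add: leaf_to_layer_iff\<close>)
qed

lemma layer_to_leaf_T: "layer_to_leaf V r par fv T = lo"
proof safe
  fix u1 u2 assume L: "(u1, u2) \<in> layer_to_leaf V r par fv T"
  then have u: "u1 \<in> leaves" "u2 \<in> leaves" by (auto simp: layer_to_leaf_def)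
  obtain m where m: "max (snd u1) (snd u2) = ereal m" "snd u1 \<le> ereal m" "snd u2 \<le> ereal m"
    using leaves_max_height[OF u] by blast
  have "(anc (ereal m) u1, anc (ereal m) u2) \<in> T m" using L layer_to_leaf_iff[OF u m(1)] by blast
  then have "anc (ereal m) u1 = anc (ereal m) u2 \<or>
      leaves_before lo (anc (ereal m) u1) (anc (ereal m) u2)"
    by (simp add: leaf_to_layer_iff)
  moreover have "u1 \<preceq> anc (ereal m) u1" "u2 \<preceq> anc (ereal m) u2"
    using below_anc leaf_in_pts u m(2,3) by blast+
  ultimately show "(u1, u2) \<in> lo"
    using leaves_eq_if_anc_eq_at_max_height[OF u m(1)] linear_order_on_refl[OF lo_linear] u
    unfolding leaves_before_def by blast
next
  fix u1 u2 assume lo: "(u1, u2) \<in> lo"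
  then have u: "u1 \<in> leaves" "u2 \<in> leaves" using linear_order_on_field[OF lo_linear] by auto
  obtain m where m: "max (snd u1) (snd u2) = ereal m" "snd u1 \<le> ereal m" "snd u2 \<le> ereal m"
    using leaves_max_height[OF u] by blast
  define a1 where "a1 = anc (ereal m) u1"
  define a2 where "a2 = anc (ereal m) u2"
  have a: "a1 \<in> lvl (ereal m)" "a2 \<in> lvl (ereal m)" "u1 \<preceq> a1" "u2 \<preceq> a2"
    using anc_in_lvl below_anc leaf_in_pts u m(2,3) by (auto simp: a1_def a2_def)
  have "leaves_before lo a1 a2" if "a1 \<noteq> a2"
  proof -
    have "u1 \<noteq> u2" using that by (auto simp: a1_def a2_def)
    then have "\<not> leaves_before lo a2 a1"
      using lo a u linear_order_on_antisym[OF lo_linear] unfolding leaves_before_def by blast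
    then show ?thesis using leaves_before_total[OF a(1,2) that] by blast
  qed
  then have "(a1, a2) \<in> T m" using a(1,2) unfolding leaf_to_layer_iff by blast
  then show "(u1, u2) \<in> layer_to_leaf V r par fv T"
    using layer_to_leaf_iff[OF u m(1)] unfolding a1_def a2_def by blast
qed

end

theorem theorem10:
  fixes V :: "'v set" and r :: 'v and par :: "'v \<Rightarrow> 'v" and fv :: "'v \<Rightarrow> ereal"
  assumes "merge_tree V r par fv"
  shows "(\<forall>ord. layer_order V r par fv ord \<longrightarrow>
            leaf_order V r par fv (layer_to_leaf V r par fv ord) \<and>
            (\<forall>h::real. 0 \<le> h \<longrightarrow> leaf_to_layer V r par fv (layer_to_leaf V r par fv ord) h = ord h)) \<and>
         (\<forall>lo. leaf_order V r par fv lo \<longrightarrow>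
            layer_order V r par fv (leaf_to_layer V r par fv lo) \<and>
            layer_to_leaf V r par fv (leaf_to_layer V r par fv lo) = lo)"
proof (intro conjI allI impI)
  fix ord assume "layer_order V r par fv ord"
  then interpret layer_ordered_mtree V r par fv ord
    using assms by unfold_locales
  show "leaf_order V r par fv L" by (rule leaf_order_L)
  show "0 \<le> h \<Longrightarrow> leaf_to_layer V r par fv L h = ord h" for h by (rule leaf_to_layer_L)
next
  fix lo assume "leaf_order V r par fv lo"
  then interpret leaf_ordered_mtree V r par fv lo
    using assms by unfold_locales
  show "layer_order V r par fv T" by (rule layer_order_T)
  show "layer_to_leaf V r par fv T = lo" by (rule layer_to_leaf_T)
qed

end
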